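(* There exists a disconnected biconvex bipartite graph that is not an induced subgraph of any connected biconvex bipartite graph.
   Context: A bipartite graph $G=(A\cup B,E)$ is biconvex if there are orderings of $A$ and of $B$ such that for every $a\in A$ the neighborhood $N(a)$ is a set of consecutive vertices in the ordering of $B$, and for every $b\in B$ the neighborhood $N(b)$ is a set of consecutive vertices in the ordering of $A$. *)

theory Defs
  imports Main
begin

definition graph :: "'a set \<Rightarrow> ('a \<Rightarrow> 'a \<Rightarrow> bool) \<Rightarrow> bool" where
  "graph V E \<longleftrightarrow> finite V \<and> (\<forall>u v. E u v \<longrightarrow> u \<in> V \<and> v \<in> V \<and> u \<noteq> v \<and> E v u)"

definition nbhd :: "('a \<Rightarrow> 'a \<Rightarrow> bool) \<Rightarrow> 'a \<Rightarrow> 'a set" where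
  "nbhd E v = {u. E v u}"

definition bipartition :: "'a set \<Rightarrow> ('a \<Rightarrow> 'a \<Rightarrow> bool) \<Rightarrow> 'a set \<Rightarrow> 'a set \<Rightarrow> bool" where
  "bipartition V E A B \<longleftrightarrow> A \<inter> B = {} \<and> A \<union> B = V \<and>
     (\<forall>u v. E u v \<longrightarrow> (u \<in> A \<and> v \<in> B) \<or> (u \<in> B \<and> v \<in> A))"

definition consecutive :: "'a set \<Rightarrow> ('a \<Rightarrow> nat) \<Rightarrow> 'a set \<Rightarrow> bool" where
  "consecutive S ord X \<longleftrightarrow> X \<subseteq> S \<and>
     (\<forall>x\<in>X. \<forall>y\<in>X. \<forall>z\<in>S. ord x \<le> ord z \<and> ord z \<le> ord y \<longrightarrow> z \<in> X)"

definition biconvex_wrt :: "'a set \<Rightarrow> ('a \<Rightarrow> 'a \<Rightarrow> bool) \<Rightarrow> 'a set \<Rightarrow> 'a set \<Rightarrow> bool" where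
  "biconvex_wrt V E A B \<longleftrightarrow> bipartition V E A B \<and>
     (\<exists>ordA ordB. inj_on ordA A \<and> inj_on ordB B \<and>
        (\<forall>a\<in>A. consecutive B ordB (nbhd E a)) \<and>
        (\<forall>b\<in>B. consecutive A ordA (nbhd E b)))"

definition biconvex_graph :: "'a set \<Rightarrow> ('a \<Rightarrow> 'a \<Rightarrow> bool) \<Rightarrow> bool" where
  "biconvex_graph V E \<longleftrightarrow> graph V E \<and> (\<exists>A B. biconvex_wrt V E A B)"

definition connected_graph :: "'a set \<Rightarrow> ('a \<Rightarrow> 'a \<Rightarrow> bool) \<Rightarrow> bool" where
  "connected_graph V E \<longleftrightarrow> V \<noteq> {} \<and> (\<forall>u\<in>V. \<forall>v\<in>V. E\<^sup>*\<^sup>* u v)"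

definition disconnected_graph :: "'a set \<Rightarrow> ('a \<Rightarrow> 'a \<Rightarrow> bool) \<Rightarrow> bool" where
  "disconnected_graph V E \<longleftrightarrow> V \<noteq> {} \<and> \<not> connected_graph V E"

definition induced_subgraph :: "'a set \<Rightarrow> ('a \<Rightarrow> 'a \<Rightarrow> bool) \<Rightarrow> 'b set \<Rightarrow> ('b \<Rightarrow> 'b \<Rightarrow> bool) \<Rightarrow> bool" where
  "induced_subgraph V E V' E' \<longleftrightarrow> (\<exists>f. inj_on f V \<and> f ` V \<subseteq> V' \<and>
     (\<forall>u\<in>V. \<forall>v\<in>V. E u v \<longleftrightarrow> E' (f u) (f v)))"

end

theory Submission
  imports Defs
begin

(*
  The graph consists of five disjoint copies of a gadget with parts {0,1,2} and {3,4,5,6}: the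
  hub 4 is adjacent to 0, 1, 2, vertex 5 to 1 and 2, and 3 and 6 are private neighbours of 1
  and 2.  Suppose the copies form an induced subgraph of a connected biconvex graph.  Three hubs
  lie in the same part Q, and in the order of Q one of them lies between the other two.  In the
  middle copy the hub lies strictly between 3 and 6, while vertices outside the closed
  neighbourhood of the copy ("far" vertices) avoid the interval from 3 to 6; so the two outer
  hubs lie beyond 3 and beyond 6 respectively.  Up to the automorphism exchanging 1 with 2 and
  3 with 6, vertex 1 lies between 0 and 2 in the order of P, and then the outer hub t beyond 3
  cannot be connected to 3: along far vertices the Q-vertices reachable from t stay on t's
  side of 3, and every edge leaving the far vertices would force a far vertex between 0 and 2
  in the order of P, hence adjacent to the hub.
*)

definition between :: "('a \<Rightarrow> nat) \<Rightarrow> 'a \<Rightarrow> 'a \<Rightarrow> 'a \<Rightarrow> bool" where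
  "between rk a b c \<longleftrightarrow> (rk a \<le> rk b \<and> rk b \<le> rk c) \<or> (rk c \<le> rk b \<and> rk b \<le> rk a)"

definition far_from :: "('a \<Rightarrow> 'a \<Rightarrow> bool) \<Rightarrow> 'a set \<Rightarrow> 'a set" where
  "far_from E X = {u. u \<notin> X \<and> (\<forall>x\<in>X. \<not> E u x)}"

lemma straddling_pair_beyond:
  assumes "\<not> between rk b a c" "\<not> between rk a c b"
    and "\<not> between rk a y b" "\<not> between rk b y c" "\<not> between rk a z b" "\<not> between rk b z c"
    and "between rk y b z"
  shows "(between rk y a b \<and> rk y \<noteq> rk a) \<or> (between rk z a b \<and> rk z \<noteq> rk a)"
proof -
  have "rk a < rk b \<and> rk b < rk c \<or> rk c < rk b \<and> rk b < rk a"
    using assms(1,2) unfolding between_def by arith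
  then show ?thesis
  proof
    assume "rk a < rk b \<and> rk b < rk c"
    moreover have "rk y < rk a \<or> rk c < rk y" "rk z < rk a \<or> rk c < rk z"
      using calculation assms(3-6) unfolding between_def by arith+
    ultimately show ?thesis
      using assms(7) unfolding between_def by auto
  next
    assume "rk c < rk b \<and> rk b < rk a"
    moreover have "rk a < rk y \<or> rk y < rk c" "rk a < rk z \<or> rk z < rk c"
      using calculation assms(3-6) unfolding between_def by arith+
    ultimately show ?thesis
      using assms(7) unfolding between_def by auto
  qed
qed

lemma consecutive_cong:
  "(\<And>x. x \<in> S \<Longrightarrow> f x = g x) \<Longrightarrow> consecutive S f X \<longleftrightarrow> consecutive S g X"
  unfolding consecutive_def by (metis subsetD)

lemma consecutive_betweenD:
  "consecutive S rk X \<Longrightarrow> a \<in> X \<Longrightarrow> c \<in> X \<Longrightarrow> b \<in> S \<Longrightarrow> between rk a b c \<Longrightarrow> b \<in> X"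
  unfolding consecutive_def between_def by (metis subsetD)

lemma three_of_five_agree:
  fixes col :: "nat \<Rightarrow> bool"
  obtains i j k where "i < 5" "j < 5" "k < 5" "i \<noteq> j" "j \<noteq> k" "i \<noteq> k" "col j = col i" "col k = col i"
proof -
  have "{c. c < 5 \<and> col c} \<union> {c. c < 5 \<and> \<not> col c} = {..<5::nat}"
    by auto
  then have "card {c. c < 5 \<and> col c} + card {c. c < 5 \<and> \<not> col c} = 5"
    using card_Un_disjoint[of "{c. c < 5 \<and> col c}" "{c. c < 5 \<and> \<not> col c}"] by auto
  then have "3 \<le> card {c. c < 5 \<and> col c = True} \<or> 3 \<le> card {c. c < 5 \<and> col c = False}"
    by simp linarith
  then obtain b where "3 \<le> card {c. c < 5 \<and> col c = b}"
    by blast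
  then obtain S where "S \<subseteq> {c. c < 5 \<and> col c = b}" "card S = 3"
    by (meson obtain_subset_with_card_n)
  then obtain i j k where "{i, j, k} \<subseteq> {c. c < 5 \<and> col c = b}" "i \<noteq> j" "j \<noteq> k" "i \<noteq> k"
    unfolding card_3_iff by blast
  then show ?thesis
    using that[of i j k] by simp
qed

lemma rtranclp_end_has_neighbour:
  assumes "symp r" "r a a'" "r\<^sup>*\<^sup>* a c"
  shows "\<exists>d. r c d"
  using assms(3) by (cases rule: rtranclp.cases) (use assms in \<open>auto dest: sympD\<close>)

lemma rtranclp_leave_set:
  assumes "r\<^sup>*\<^sup>* a b" "a \<in> W" "b \<notin> W"
  shows "\<exists>c d. (\<lambda>u v. r u v \<and> u \<in> W \<and> v \<in> W)\<^sup>*\<^sup>* a c \<and> c \<in> W \<and> r c d \<and> d \<notin> W"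
  using assms
proof (induction rule: converse_rtranclp_induct)
  case base
  then show ?case by blast
next
  case (step a a')
  show ?case
  proof (cases "a' \<in> W")
    case True
    with step obtain c d where path: "(\<lambda>u v. r u v \<and> u \<in> W \<and> v \<in> W)\<^sup>*\<^sup>* a' c"
      and "c \<in> W" "r c d" "d \<notin> W"
      by blast
    have "(\<lambda>u v. r u v \<and> u \<in> W \<and> v \<in> W)\<^sup>*\<^sup>* a c"
      using step.hyps(1) step.prems(1) True path by (simp add: converse_rtranclp_into_rtranclp)
    with \<open>c \<in> W\<close> \<open>r c d\<close> \<open>d \<notin> W\<close> show ?thesis by blast
  next
    case False
    with step show ?thesis by blast
  qed
qed

text \<open>The rank is not required to be injective: no argument below needs it.\<close>

locale biconvex_order =
  fixes E :: "'a \<Rightarrow> 'a \<Rightarrow> bool" and P Q :: "'a set" and rk :: "'a \<Rightarrow> nat"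
  assumes parts_disjoint: "P \<inter> Q = {}"
    and edge_parts: "E u v \<Longrightarrow> (u \<in> P \<and> v \<in> Q) \<or> (u \<in> Q \<and> v \<in> P)"
    and edge_sym: "E u v \<Longrightarrow> E v u"
    and consecutive_nbhd_P: "p \<in> P \<Longrightarrow> consecutive Q rk (nbhd E p)"
    and consecutive_nbhd_Q: "q \<in> Q \<Longrightarrow> consecutive P rk (nbhd E q)"
begin

lemma edge_P_Q: "E u v \<Longrightarrow> v \<in> Q \<Longrightarrow> u \<in> P"
  and edge_Q_P: "E u v \<Longrightarrow> v \<in> P \<Longrightarrow> u \<in> Q"
  using edge_parts parts_disjoint by blast+

lemma adj_between_Q:
  assumes "E p a" "E p c" "a \<in> Q" "b \<in> Q" "between rk a b c"
  shows "E p b"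
proof -
  have "p \<in> P" using edge_P_Q assms(1,3) .
  with assms show ?thesis
    using consecutive_betweenD[OF consecutive_nbhd_P] unfolding nbhd_def by blast
qed

lemma adj_between_P:
  assumes "E p a" "E p c" "a \<in> P" "b \<in> P" "between rk a b c"
  shows "E p b"
proof -
  have "p \<in> Q" using edge_Q_P assms(1,3) .
  with assms show ?thesis
    using consecutive_betweenD[OF consecutive_nbhd_Q] unfolding nbhd_def by blast
qed

lemma neighbour_between_non_neighbours:
  assumes "E q u" "E q w" "\<not> E q a" "\<not> E q b" "u \<in> P" "w \<in> P" "a \<in> P" "b \<in> P"
    and "between rk a u b"
  shows "between rk a w b"
proof (rule ccontr)
  assume "\<not> between rk a w b"
  with assms(9) have "between rk w a u \<or> between rk w b u"
    unfolding between_def by linarith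
  with assms show False
    using adj_between_P by blast
qed

lemma far_path_stays_on_side:
  assumes "x \<in> Q" "y \<in> Q" "rk y \<noteq> rk x" "\<forall>t\<in>W. \<not> E t x"
    and "(\<lambda>u v. E u v \<and> u \<in> W \<and> v \<in> W)\<^sup>*\<^sup>* y t"
  shows "(t \<in> Q \<longrightarrow> \<not> between rk y x t) \<and> (t \<in> P \<longrightarrow> (\<forall>s. E t s \<longrightarrow> \<not> between rk y x s))"
  using assms(5)
proof (induction rule: rtranclp_induct)
  case base
  show ?case
    using assms(2,3) parts_disjoint unfolding between_def by auto
next
  case (step a t)
  then have "E a t" "t \<in> W" by auto
  show ?case
  proof (cases "t \<in> Q")
    case True
    then have "a \<in> P" "t \<notin> P"
      using edge_P_Q[OF \<open>E a t\<close>] parts_disjoint by auto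
    with step.IH \<open>E a t\<close> True show ?thesis by simp
  next
    case False
    then have "t \<in> P" "a \<in> Q"
      using edge_parts[OF \<open>E a t\<close>] by auto
    have "\<not> between rk y x s" if "E t s" for s
    proof
      assume "between rk y x s"
      moreover have "\<not> between rk y x a"
        using step.IH \<open>a \<in> Q\<close> by simp
      ultimately have "between rk a x s"
        unfolding between_def by linarith
      with \<open>E a t\<close> \<open>E t s\<close> \<open>a \<in> Q\<close> \<open>x \<in> Q\<close> have "E t x"
        using adj_between_Q[OF edge_sym[OF \<open>E a t\<close>]] by blast
      with assms(4) \<open>t \<in> W\<close> show False by blast
    qed
    with False \<open>t \<in> P\<close> show ?thesis by simp
  qed
qed

end

lemma biconvex_order_swap: "biconvex_order E P Q rk \<Longrightarrow> biconvex_order E Q P rk"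
  unfolding biconvex_order_def by blast

lemma biconvex_graph_order:
  assumes "biconvex_graph V E"
  obtains A B rk where "biconvex_order E A B rk" "V = A \<union> B"
proof -
  obtain A B ordA ordB where "graph V E" "bipartition V E A B"
    and cA: "\<forall>a\<in>A. consecutive B ordB (nbhd E a)" and cB: "\<forall>b\<in>B. consecutive A ordA (nbhd E b)"
    using assms unfolding biconvex_graph_def biconvex_wrt_def by blast
  define rk where "rk v = (if v \<in> A then ordA v else ordB v)" for v
  have "A \<inter> B = {}" "V = A \<union> B" "\<And>u v. E u v \<Longrightarrow> (u \<in> A \<and> v \<in> B) \<or> (u \<in> B \<and> v \<in> A)"
    using \<open>bipartition V E A B\<close> unfolding bipartition_def by auto
  moreover have "consecutive B rk X \<longleftrightarrow> consecutive B ordB X" for X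
    by (rule consecutive_cong) (use \<open>A \<inter> B = {}\<close> in \<open>auto simp: rk_def\<close>)
  moreover have "consecutive A rk X \<longleftrightarrow> consecutive A ordA X" for X
    by (rule consecutive_cong) (simp add: rk_def)
  ultimately have "biconvex_order E A B rk"
    using \<open>graph V E\<close> cA cB unfolding graph_def by unfold_locales auto
  with \<open>V = A \<union> B\<close> show ?thesis using that by blast
qed

locale private_neighbour_setting = biconvex_order +
  fixes a l r h b :: 'a
  assumes parts: "a \<in> P" "l \<in> P" "r \<in> P" "h \<in> Q" "b \<in> Q"
    and edges: "E a b" "E l h" "E r h" "\<not> E l b" "\<not> E r b"
    and a_between: "between rk l a r"
begin

lemma no_exit_from_Q:
  assumes "c \<in> Q" "\<not> E c l" "\<not> E c r" "E c p" "\<not> E p h" "E c w" "E w x" "x \<in> Q"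
    and "between rk c b x"
  shows False
proof -
  have "w \<in> P" "p \<in> P"
    using edge_P_Q[OF edge_sym] assms(1,4,6) by blast+
  have "E w b"
    using adj_between_Q[OF edge_sym[OF assms(6)] assms(7) assms(1) parts(5) assms(9)] .
  then have "between rk l w r"
    using neighbour_between_non_neighbours[OF edge_sym[OF edges(1)] edge_sym[OF \<open>E w b\<close>]]
      edges(4,5) edge_sym parts \<open>w \<in> P\<close> a_between by blast
  then have "between rk l p r"
    using neighbour_between_non_neighbours[OF assms(6,4,2,3)] \<open>w \<in> P\<close> \<open>p \<in> P\<close> parts by blast
  then have "E h p"
    using adj_between_P[OF edge_sym[OF edges(2)] edge_sym[OF edges(3)] parts(2) \<open>p \<in> P\<close>] by blast
  with assms(5) show False
    using edge_sym by blast
qed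

lemma no_exit_from_P:
  assumes "c \<in> P" "\<not> E c h" "E c w" "between rk w b h" "E w x" "x \<in> P"
    and "x = a \<or> (E x h \<and> \<not> E x b)"
  shows False
proof -
  have "w \<in> Q"
    using edge_Q_P[OF edge_sym] assms(1,3) by blast
  have w_avoids: "\<not> E w z" if "E z h" "\<not> E z b" for z
    using adj_between_Q[OF _ that(1) \<open>w \<in> Q\<close> parts(5) assms(4)] that(2) edge_sym by blast
  then have "\<not> E w l" "\<not> E w r" "E w a"
    using edges assms(5,7) by blast+
  then have "between rk l c r"
    using neighbour_between_non_neighbours[of w a c l r] edge_sym[OF assms(3)] assms(1) parts a_between
    by blast
  then have "E h c"
    using adj_between_P[OF edge_sym[OF edges(2)] edge_sym[OF edges(3)] parts(2) assms(1)] by blast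
  with assms(2) show False
    using edge_sym by blast
qed

lemma not_connected_from_beyond:
  assumes in_X: "a \<in> X" "l \<in> X" "r \<in> X" "h \<in> X" "b \<in> X"
    and X_P: "\<And>x. x \<in> X \<Longrightarrow> x \<in> P \<Longrightarrow> x = a \<or> (E x h \<and> \<not> E x b)"
    and X_Q: "\<And>x. x \<in> X \<Longrightarrow> x \<in> Q \<Longrightarrow> between rk t b x"
    and beyond: "t \<in> Q" "rk t \<noteq> rk b"
    and far: "t \<in> far_from E X" "t' \<in> far_from E X" "E t t'"
  shows "\<not> E\<^sup>*\<^sup>* t b"
proof
  define D where "D = far_from E X"
  define R where "R u v \<longleftrightarrow> E u v \<and> u \<in> D \<and> v \<in> D" for u v
  have D_far: "u \<notin> X" "\<not> E u x" if "u \<in> D" "x \<in> X" for u x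
    using that unfolding D_def far_from_def by auto
  assume "E\<^sup>*\<^sup>* t b"
  moreover have "b \<notin> D" using D_far in_X(5) by blast
  ultimately obtain c w where "R\<^sup>*\<^sup>* t c" "c \<in> D" "E c w" "w \<notin> D"
    using rtranclp_leave_set[of E t b D] far(1) unfolding D_def R_def by blast
  have side: "(c \<in> Q \<longrightarrow> \<not> between rk t b c) \<and> (c \<in> P \<longrightarrow> (\<forall>s. E c s \<longrightarrow> \<not> between rk t b s))"
    using far_path_stays_on_side[OF parts(5) beyond, of D c] D_far in_X(5) \<open>R\<^sup>*\<^sup>* t c\<close>
    unfolding R_def by (metis (no_types, lifting) edge_sym)
  have "w \<notin> X" using D_far \<open>c \<in> D\<close> \<open>E c w\<close> by blast
  with \<open>w \<notin> D\<close> obtain x where "x \<in> X" "E w x"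
    unfolding D_def far_from_def by blast
  consider "c \<in> Q" | "c \<in> P" using edge_parts[OF \<open>E c w\<close>] by blast
  then show False
  proof cases
    case 1
    have "symp R" "R t t'"
      using edge_sym far unfolding symp_def R_def D_def by blast+
    then obtain p where "R c p"
      using rtranclp_end_has_neighbour \<open>R\<^sup>*\<^sup>* t c\<close> by metis
    have "x \<in> Q"
      using edge_P_Q[OF edge_sym[OF \<open>E c w\<close>] 1] edge_Q_P[OF edge_sym[OF \<open>E w x\<close>]] by blast
    then have "between rk c b x"
      using side 1 X_Q[OF \<open>x \<in> X\<close>] unfolding between_def by linarith
    with 1 \<open>R c p\<close> \<open>c \<in> D\<close> show False
      using no_exit_from_Q[OF 1 _ _ _ _ \<open>E c w\<close> \<open>E w x\<close> \<open>x \<in> Q\<close>] D_far in_X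
      unfolding R_def by blast
  next
    case 2
    have "x \<in> P"
      using edge_Q_P[OF edge_sym[OF \<open>E c w\<close>] 2] edge_P_Q[OF edge_sym[OF \<open>E w x\<close>]] by blast
    have "\<not> between rk t b w" using side 2 \<open>E c w\<close> by blast
    then have "between rk w b h"
      using X_Q[OF in_X(4) parts(4)] unfolding between_def by linarith
    with 2 \<open>c \<in> D\<close> show False
      using no_exit_from_P[OF 2 _ \<open>E c w\<close> _ \<open>E w x\<close> \<open>x \<in> P\<close> X_P[OF \<open>x \<in> X\<close> \<open>x \<in> P\<close>]]
        D_far in_X by blast
  qed
qed

end

definition gadget_adj :: "nat \<Rightarrow> nat \<Rightarrow> bool" where
  "gadget_adj i j \<longleftrightarrow> {i, j} \<in> {{0,4}, {1,3}, {1,4}, {1,5}, {2,4}, {2,5}, {2,6}}"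

lemma gadget_adj_intervals:
  "gadget_adj i m \<longleftrightarrow>
     (i = 0 \<and> m = 4) \<or> (i = 1 \<and> 3 \<le> m \<and> m \<le> 5) \<or> (i = 2 \<and> 4 \<le> m \<and> m \<le> 6) \<or>
     (i = 3 \<and> m = 1) \<or> (i = 4 \<and> m \<le> 2) \<or> (i = 5 \<and> 1 \<le> m \<and> m \<le> 2) \<or> (i = 6 \<and> m = 2)"
  unfolding gadget_adj_def insert_iff empty_iff doubleton_eq_iff by presburger

lemma gadget_adj_sym: "gadget_adj i j \<Longrightarrow> gadget_adj j i"
  unfolding gadget_adj_def by (simp add: insert_commute)

lemma gadget_adj_irrefl: "\<not> gadget_adj i i"
  unfolding gadget_adj_intervals by presburger

lemma gadget_adj_parts: "gadget_adj i j \<Longrightarrow> (i < 3 \<and> 3 \<le> j \<and> j < 7) \<or> (3 \<le> i \<and> i < 7 \<and> j < 3)"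
  unfolding gadget_adj_intervals by presburger

lemma gadget_adj_convex:
  assumes "gadget_adj i j" "gadget_adj i k" "j \<le> m" "m \<le> k"
  shows "gadget_adj i m"
  using assms unfolding gadget_adj_intervals by presburger

definition gadget_swap :: "nat \<Rightarrow> nat" where
  "gadget_swap = id(1 := 2, 2 := 1, 3 := 6, 6 := 3)"

lemma gadget_swap_adj: "gadget_adj (gadget_swap i) (gadget_swap j) \<longleftrightarrow> gadget_adj i j"
  unfolding gadget_adj_def gadget_swap_def by (auto simp: doubleton_eq_iff)

lemma gadget_swap_involution: "gadget_swap (gadget_swap i) = i"
  unfolding gadget_swap_def by simp

lemma gadget_swap_image: "gadget_swap ` {..<7} = {..<7}"
proof
  have swap_less: "gadget_swap i < 7" if "i < 7" for i
    using that unfolding gadget_swap_def by simp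
  then show "gadget_swap ` {..<7} \<subseteq> {..<7}"
    by auto
  show "{..<7} \<subseteq> gadget_swap ` {..<7}"
    using swap_less gadget_swap_involution by (metis image_eqI lessThan_iff subsetI)
qed

definition induces_gadget :: "('a \<Rightarrow> 'a \<Rightarrow> bool) \<Rightarrow> (nat \<Rightarrow> 'a) \<Rightarrow> bool" where
  "induces_gadget E g \<longleftrightarrow> (\<forall>i<7. \<forall>j<7. E (g i) (g j) \<longleftrightarrow> gadget_adj i j)"

lemma induces_gadget_adj:
  "induces_gadget E g \<Longrightarrow> i < 7 \<Longrightarrow> j < 7 \<Longrightarrow> E (g i) (g j) \<longleftrightarrow> gadget_adj i j"
  unfolding induces_gadget_def by blast

definition copies_adj :: "nat \<Rightarrow> nat \<Rightarrow> bool" where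
  "copies_adj u v \<longleftrightarrow> u < 35 \<and> v < 35 \<and> u div 7 = v div 7 \<and> gadget_adj (u mod 7) (v mod 7)"

lemma copies_adj_convex:
  assumes "copies_adj u x" "copies_adj u y" "x \<le> z" "z \<le> y"
  shows "copies_adj u z"
proof -
  have same_copy: "x div 7 = u div 7" "y div 7 = u div 7" "u < 35" "y < 35"
    using assms(1,2) unfolding copies_adj_def by auto
  then have "z div 7 = x div 7"
    using div_le_mono[OF assms(3)] div_le_mono[OF assms(4)] by (metis le_antisym)
  then have "x mod 7 \<le> z mod 7" "z mod 7 \<le> y mod 7"
    using assms(3,4) same_copy by (metis add_le_cancel_left div_mult_mod_eq)+
  then have "gadget_adj (u mod 7) (z mod 7)"
    using assms(1,2) unfolding copies_adj_def by (blast intro: gadget_adj_convex)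
  with same_copy \<open>z div 7 = x div 7\<close> assms(4) show ?thesis
    unfolding copies_adj_def by simp
qed

lemma copies_nbhd_consecutive: "nbhd copies_adj u \<subseteq> S \<Longrightarrow> consecutive S id (nbhd copies_adj u)"
  unfolding consecutive_def nbhd_def id_def by (blast intro: copies_adj_convex)

lemma copies_biconvex: "biconvex_graph {..<35} copies_adj"
proof -
  define A :: "nat set" where "A = {u. u < 35 \<and> u mod 7 < 3}"
  define B :: "nat set" where "B = {u. u < 35 \<and> 3 \<le> u mod 7}"
  have graph: "graph {..<35} copies_adj"
    unfolding graph_def copies_adj_def by (auto dest: gadget_adj_sym simp: gadget_adj_irrefl)
  have bip: "bipartition {..<35} copies_adj A B"
    unfolding bipartition_def A_def B_def copies_adj_def by (auto dest: gadget_adj_parts)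
  have nbhd_A: "nbhd copies_adj a \<subseteq> B" if "a \<in> A" for a
    using that unfolding A_def B_def nbhd_def copies_adj_def by (auto dest: gadget_adj_parts)
  have nbhd_B: "nbhd copies_adj b \<subseteq> A" if "b \<in> B" for b
    using that unfolding A_def B_def nbhd_def copies_adj_def by (auto dest: gadget_adj_parts)
  have "biconvex_wrt {..<35} copies_adj A B"
    unfolding biconvex_wrt_def
    using bip inj_on_id copies_nbhd_consecutive[OF nbhd_A] copies_nbhd_consecutive[OF nbhd_B]
    by blast
  with graph show ?thesis
    unfolding biconvex_graph_def by blast
qed

lemma copies_disconnected: "disconnected_graph {..<35} copies_adj"
proof -
  have same_copy: "copies_adj\<^sup>*\<^sup>* u v \<Longrightarrow> v div 7 = u div 7" for u v
    by (induction rule: rtranclp_induct) (auto simp: copies_adj_def)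
  have "\<not> copies_adj\<^sup>*\<^sup>* 0 7"
    using same_copy[of 0 7] by auto
  moreover have "(0::nat) \<in> {..<35}" "(7::nat) \<in> {..<35}"
    by simp_all
  ultimately show ?thesis
    unfolding disconnected_graph_def connected_graph_def by blast
qed

lemma copy_induces_gadget:
  assumes induced: "\<And>u v. u < 35 \<Longrightarrow> v < 35 \<Longrightarrow> copies_adj u v \<longleftrightarrow> E (f u) (f v)" and "c < 5"
  shows "induces_gadget E (\<lambda>i. f (7 * c + i))"
  unfolding induces_gadget_def
proof (intro allI impI)
  fix i j :: nat
  assume "i < 7" "j < 7"
  then show "E (f (7 * c + i)) (f (7 * c + j)) \<longleftrightarrow> gadget_adj i j"
    using induced[of "7 * c + i" "7 * c + j"] \<open>c < 5\<close> unfolding copies_adj_def by simp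
qed

lemma other_copy_far:
  assumes induced: "\<And>u v. u < 35 \<Longrightarrow> v < 35 \<Longrightarrow> copies_adj u v \<longleftrightarrow> E (f u) (f v)"
    and inj: "inj_on f {..<35}" and "c < 5" "d < 5" "c \<noteq> d" "i < 7"
  shows "f (7 * d + i) \<in> far_from E ((\<lambda>j. f (7 * c + j)) ` {..<7})"
proof -
  have "f (7 * d + i) \<noteq> f (7 * c + j) \<and> \<not> E (f (7 * d + i)) (f (7 * c + j))" if "j < 7" for j
  proof -
    have "7 * d + i < 35" "7 * c + j < 35" "(7 * d + i) div 7 \<noteq> (7 * c + j) div 7"
      using assms(3-6) that by auto
    then show ?thesis
      using induced inj_onD[OF inj] unfolding copies_adj_def by (metis lessThan_iff)
  qed
  then show ?thesis
    unfolding far_from_def by blast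
qed

context biconvex_order
begin

lemma gadget_parts:
  assumes emb: "induces_gadget E g" and "g 4 \<in> Q"
  shows "g 0 \<in> P" "g 1 \<in> P" "g 2 \<in> P" "g 3 \<in> Q" "g 5 \<in> Q" "g 6 \<in> Q"
proof -
  have "E (g 0) (g 4)" "E (g 1) (g 4)" "E (g 2) (g 4)" "E (g 3) (g 1)" "E (g 5) (g 1)" "E (g 6) (g 2)"
    using emb by (simp_all add: induces_gadget_def gadget_adj_intervals)
  then show "g 0 \<in> P" "g 1 \<in> P" "g 2 \<in> P" "g 3 \<in> Q" "g 5 \<in> Q" "g 6 \<in> Q"
    using edge_P_Q edge_Q_P \<open>g 4 \<in> Q\<close> by blast+
qed

lemma far_beyond_gadget_disconnected:
  assumes emb: "induces_gadget E g" and "g 4 \<in> Q"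
    and "between rk (g 0) (g 1) (g 2)"
    and beyond: "t \<in> Q" "between rk t (g 3) (g 4)" "rk t \<noteq> rk (g 3)"
    and far: "t \<in> far_from E (g ` {..<7})" "t' \<in> far_from E (g ` {..<7})" "E t t'"
  shows "\<not> E\<^sup>*\<^sup>* t (g 3)"
proof -
  note g_parts = gadget_parts[OF emb \<open>g 4 \<in> Q\<close>]
  have adj: "E (g 1) (g 3)" "E (g 0) (g 4)" "E (g 2) (g 4)" "E (g 2) (g 5)" "E (g 2) (g 6)"
    "\<not> E (g 0) (g 3)" "\<not> E (g 2) (g 3)"
    using emb by (simp_all add: induces_gadget_def gadget_adj_intervals)
  interpret private_neighbour_setting E P Q rk "g 1" "g 0" "g 2" "g 4" "g 3"
    using g_parts adj \<open>g 4 \<in> Q\<close> assms(3) by unfold_locales auto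
  have vertex_cases: "x = g 0 \<or> x = g 1 \<or> x = g 2 \<or> x = g 3 \<or> x = g 4 \<or> x = g 5 \<or> x = g 6"
    if x_in: "x \<in> g ` {..<7}" for x
  proof -
    obtain i where "i < 7" "x = g i" using x_in by blast
    moreover have "i = 0 \<or> i = 1 \<or> i = 2 \<or> i = 3 \<or> i = 4 \<or> i = 5 \<or> i = 6"
      using \<open>i < 7\<close> by presburger
    ultimately show ?thesis by blast
  qed
  have "\<not> between rk (g 4) (g 3) (g 5)" "\<not> between rk (g 4) (g 3) (g 6)"
    using adj_between_Q[OF adj(3) adj(4)] adj_between_Q[OF adj(3) adj(5)] adj(7) \<open>g 4 \<in> Q\<close> g_parts
    by blast+
  with beyond have X_Q: "between rk t (g 3) x" if "x \<in> g ` {..<7}" "x \<in> Q" for x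
    using vertex_cases[OF that(1)] that(2) g_parts parts_disjoint unfolding between_def by auto
  have X_P: "x = g 1 \<or> (E x (g 4) \<and> \<not> E x (g 3))" if "x \<in> g ` {..<7}" "x \<in> P" for x
  proof -
    have "x \<notin> Q" using that(2) parts_disjoint by blast
    with vertex_cases[OF that(1)] g_parts adj \<open>g 4 \<in> Q\<close> show ?thesis by auto
  qed
  show ?thesis
    using not_connected_from_beyond[of "g ` {..<7}", OF _ _ _ _ _ X_P X_Q beyond(1,3) far] by simp
qed

lemma gadget_orientation:
  assumes emb: "induces_gadget E g" and "g 4 \<in> Q"
  obtains g' where "induces_gadget E g'"
    and "g' 4 = g 4" "g' ` {..<7} = g ` {..<7}" "between rk (g' 0) (g' 1) (g' 2)"
proof -
  note parts = gadget_parts[OF emb \<open>g 4 \<in> Q\<close>]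
  have "E (g 5) (g 1)" "E (g 5) (g 2)" "\<not> E (g 5) (g 0)"
    using emb by (simp_all add: induces_gadget_def gadget_adj_intervals)
  then have "\<not> between rk (g 1) (g 0) (g 2)"
    using adj_between_P parts by blast
  then consider "between rk (g 0) (g 1) (g 2)" | "between rk (g 0) (g 2) (g 1)"
    unfolding between_def by linarith
  then show ?thesis
  proof cases
    case 1
    with emb show ?thesis using that by blast
  next
    case 2
    have "gadget_swap i < 7" if "i < 7" for i
      using that gadget_swap_image by blast
    then have "induces_gadget E (g \<circ> gadget_swap)"
      using emb gadget_swap_adj unfolding induces_gadget_def by simp
    moreover have "(g \<circ> gadget_swap) ` {..<7} = g ` {..<7}"
      by (metis image_comp gadget_swap_image)
    ultimately show ?thesis
      using that[of "g \<circ> gadget_swap"] 2 by (simp add: gadget_swap_def)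
  qed
qed

lemma gadget_hub_not_between_far_vertices:
  assumes emb: "induces_gadget E g" and "g 4 \<in> Q"
    and "y \<in> Q" "z \<in> Q" "between rk y (g 4) z"
    and far: "y \<in> far_from E (g ` {..<7})" "y' \<in> far_from E (g ` {..<7})" "E y y'"
      "z \<in> far_from E (g ` {..<7})" "z' \<in> far_from E (g ` {..<7})" "E z z'"
    and connected: "\<And>v. v \<in> g ` {..<7} \<Longrightarrow> E\<^sup>*\<^sup>* y v" "\<And>v. v \<in> g ` {..<7} \<Longrightarrow> E\<^sup>*\<^sup>* z v"
  shows False
proof -
  obtain h where emb_h: "induces_gadget E h"
    and "h 4 = g 4" and h_image: "h ` {..<7} = g ` {..<7}" and "between rk (h 0) (h 1) (h 2)"
    using gadget_orientation[OF emb \<open>g 4 \<in> Q\<close>] by blast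
  have "h 4 \<in> Q" using \<open>h 4 = g 4\<close> \<open>g 4 \<in> Q\<close> by simp
  note parts = gadget_parts[OF emb_h \<open>h 4 \<in> Q\<close>] \<open>h 4 \<in> Q\<close>
  have adj: "E (h 1) (h 3)" "E (h 1) (h 4)" "E (h 2) (h 4)" "E (h 2) (h 6)" "\<not> E (h 1) (h 6)"
    "\<not> E (h 2) (h 3)"
    using emb_h by (simp_all add: induces_gadget_def gadget_adj_intervals)
  have in_image: "h 1 \<in> g ` {..<7}" "h 2 \<in> g ` {..<7}" "h 3 \<in> g ` {..<7}"
    unfolding h_image[symmetric] by simp_all
  have outside: "\<not> between rk (h 3) t (h 4)" "\<not> between rk (h 4) t (h 6)"
    if "t \<in> Q" "t \<in> far_from E (g ` {..<7})" for t
  proof -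
    have "\<not> E t (h 1)" "\<not> E t (h 2)"
      using that(2) in_image unfolding far_from_def by blast+
    then have "\<not> E (h 1) t" "\<not> E (h 2) t"
      using edge_sym by blast+
    then show "\<not> between rk (h 3) t (h 4)" "\<not> between rk (h 4) t (h 6)"
      using adj_between_Q[OF adj(1) adj(2)] adj_between_Q[OF adj(3) adj(4)] parts that(1) by blast+
  qed
  have hub_inside: "\<not> between rk (h 4) (h 3) (h 6)" "\<not> between rk (h 3) (h 6) (h 4)"
    using adj_between_Q[OF adj(3) adj(4)] adj_between_Q[OF adj(1) adj(2)] adj(5,6) parts by blast+
  have "between rk y (h 4) z"
    using \<open>between rk y (g 4) z\<close> \<open>h 4 = g 4\<close> by simp
  then have "(between rk y (h 3) (h 4) \<and> rk y \<noteq> rk (h 3)) \<or> (between rk z (h 3) (h 4) \<and> rk z \<noteq> rk (h 3))"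
    using straddling_pair_beyond[OF hub_inside outside[OF \<open>y \<in> Q\<close> far(1)] outside[OF \<open>z \<in> Q\<close> far(4)]]
    by blast
  moreover have "E\<^sup>*\<^sup>* y (h 3)" "E\<^sup>*\<^sup>* z (h 3)"
    using connected in_image by auto
  moreover note beyond = far_beyond_gadget_disconnected[OF emb_h \<open>h 4 \<in> Q\<close>
      \<open>between rk (h 0) (h 1) (h 2)\<close>, unfolded h_image]
  ultimately show False
    using beyond[OF \<open>y \<in> Q\<close> _ _ far(1-3)] beyond[OF \<open>z \<in> Q\<close> _ _ far(4-6)] by blast
qed

lemma no_three_hubs_in_part:
  assumes induced: "\<And>u v. u < 35 \<Longrightarrow> v < 35 \<Longrightarrow> copies_adj u v \<longleftrightarrow> E (f u) (f v)"
    and inj: "inj_on f {..<35}"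
    and connected: "\<And>u v. u < 35 \<Longrightarrow> v < 35 \<Longrightarrow> E\<^sup>*\<^sup>* (f u) (f v)"
    and copies: "i < 5" "j < 5" "k < 5" "i \<noteq> j" "j \<noteq> k" "i \<noteq> k"
    and hubs: "f (7 * i + 4) \<in> Q" "f (7 * j + 4) \<in> Q" "f (7 * k + 4) \<in> Q"
  shows False
proof -
  have middle_hub: False
    if "m < 5" "c < 5" "d < 5" "m \<noteq> c" "m \<noteq> d"
      and "f (7 * m + 4) \<in> Q" "f (7 * c + 4) \<in> Q" "f (7 * d + 4) \<in> Q"
      and "between rk (f (7 * c + 4)) (f (7 * m + 4)) (f (7 * d + 4))" for m c d
  proof -
    let ?g = "\<lambda>a. f (7 * m + a)"
    have far: "f (7 * e + a) \<in> far_from E (?g ` {..<7})" if "e < 5" "e \<noteq> m" "a < 7" for e a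
      using other_copy_far[where E = E and f = f, OF induced inj \<open>m < 5\<close> that(1)] that by auto
    have hub_edge: "E (f (7 * e + 4)) (f (7 * e + 1))" if "e < 5" for e
      using induces_gadget_adj[OF copy_induces_gadget[where E = E and f = f, OF induced that], of 4 1]
      by (simp add: gadget_adj_intervals)
    have reach: "E\<^sup>*\<^sup>* (f (7 * e + 4)) v" if "e < 5" "v \<in> ?g ` {..<7}" for e v
      using that connected \<open>m < 5\<close> by auto
    show False
      by (rule gadget_hub_not_between_far_vertices[OF copy_induces_gadget[where E = E and f = f,
            OF induced \<open>m < 5\<close>] that(6,7,8,9) far[of c 4] far[of c 1] hub_edge[of c]
            far[of d 4] far[of d 1] hub_edge[of d] reach[of c] reach[of d]])
        (use that in simp_all)
  qed
  have "between rk (f (7 * j + 4)) (f (7 * i + 4)) (f (7 * k + 4))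
    \<or> between rk (f (7 * i + 4)) (f (7 * j + 4)) (f (7 * k + 4))
    \<or> between rk (f (7 * i + 4)) (f (7 * k + 4)) (f (7 * j + 4))"
    unfolding between_def by linarith
  then show False
    using middle_hub copies hubs by metis
qed

end

lemma copies_not_induced_in_connected_biconvex:
  assumes "biconvex_graph V E" "connected_graph V E"
  shows "\<not> induced_subgraph {..<35} copies_adj V E"
proof
  assume "induced_subgraph {..<35} copies_adj V E"
  then obtain f where inj: "inj_on f {..<35}" and "f ` {..<35} \<subseteq> V"
    and induced: "\<And>u v. u < 35 \<Longrightarrow> v < 35 \<Longrightarrow> copies_adj u v \<longleftrightarrow> E (f u) (f v)"
    unfolding induced_subgraph_def by auto
  then have connected: "\<And>u v. u < 35 \<Longrightarrow> v < 35 \<Longrightarrow> E\<^sup>*\<^sup>* (f u) (f v)"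
    using assms(2) unfolding connected_graph_def by (auto simp: image_subset_iff)
  obtain A B rk where order: "biconvex_order E A B rk" and "V = A \<union> B"
    using biconvex_graph_order[OF assms(1)] .
  obtain i j k where copies: "i < 5" "j < 5" "k < 5" "i \<noteq> j" "j \<noteq> k" "i \<noteq> k"
    and same_part: "(f (7 * j + 4) \<in> B) = (f (7 * i + 4) \<in> B)" "(f (7 * k + 4) \<in> B) = (f (7 * i + 4) \<in> B)"
    by (rule three_of_five_agree[of "\<lambda>c. f (7 * c + 4) \<in> B"])
  have "f (7 * c + 4) \<in> A \<union> B" if "c < 5" for c
  proof -
    have "7 * c + 4 \<in> {..<35}" using that by simp
    then show ?thesis using \<open>f ` {..<35} \<subseteq> V\<close> \<open>V = A \<union> B\<close> by blast
  qed
  then show False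
    using biconvex_order.no_three_hubs_in_part[OF order induced inj connected copies]
      biconvex_order.no_three_hubs_in_part[OF biconvex_order_swap[OF order] induced inj connected copies]
      same_part copies by blast
qed

theorem proposition1:
  shows "\<exists>(V :: nat set) E. biconvex_graph V E \<and> disconnected_graph V E \<and>
           \<not> (\<exists>(V' :: nat set) E'. biconvex_graph V' E' \<and> connected_graph V' E' \<and>
                induced_subgraph V E V' E')"
  using copies_biconvex copies_disconnected copies_not_induced_in_connected_biconvex by blast

end
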